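(* Let $m\ge1$ and let $\Omega\subset\mathbb{R}^{2m}$ be a bounded domain with coordinates $(x_1,\dots,x_{2m})$. Let $\vec F=(f_1,f_2,\dots,f_{2m})$ be a $C^1$ vector field on $\Omega$ and define $\vec F^{*}=(f_2,-f_1,f_4,-f_3,\dots,f_{2m},-f_{2m-1})$. For $w\in C^1(\Omega)$ let $S_{\vec F}(w)=\{p\in\Omega:(\nabla w+\vec F)(p)=0\}$ and $N_{\vec F}(w)=(\nabla w+\vec F)/|\nabla w+\vec F|$ on $\Omega\setminus S_{\vec F}(w)$. Let $u,v\in C^2(\Omega)\cap C^0(\bar\Omega)$ satisfy $N_{\vec F}(u)=N_{\vec F}(v)$ in $\Omega\setminus(S_{\vec F}(u)\cup S_{\vec F}(v))$ and $u=v$ on $\partial\Omega$, and suppose $\operatorname{div}\vec F^*>0$ almost everywhere in $\Omega$. Then $u=v$ on $\bar\Omega$. *)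

theory Defs
  imports "HOL-Analysis.Analysis"
begin

text \<open>Points of R^(2m) are vectors indexed by 'm \<times> bool; the coordinate
  (i, False) plays the role of x_(2i-1) and (i, True) that of x_(2i).\<close>

definition grad :: "(real ^ 'n \<Rightarrow> real) \<Rightarrow> real ^ 'n \<Rightarrow> real ^ 'n" where
  "grad w p = (\<chi> i. frechet_derivative w (at p) (axis i 1))"

definition C1_fun :: "(real ^ 'n) set \<Rightarrow> (real ^ 'n \<Rightarrow> real) \<Rightarrow> bool" where
  "C1_fun S w \<longleftrightarrow> (\<forall>x\<in>S. w differentiable (at x)) \<and> continuous_on S (grad w)"

definition C1_field :: "(real ^ 'n) set \<Rightarrow> (real ^ 'n \<Rightarrow> real ^ 'n) \<Rightarrow> bool" where
  "C1_field S F \<longleftrightarrow> (\<forall>x\<in>S. F differentiable (at x)) \<and>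
     (\<forall>i j. continuous_on S (\<lambda>x. frechet_derivative F (at x) (axis j 1) $ i))"

definition C2_fun :: "(real ^ 'n) set \<Rightarrow> (real ^ 'n \<Rightarrow> real) \<Rightarrow> bool" where
  "C2_fun S w \<longleftrightarrow> C1_fun S w \<and> C1_field S (grad w)"

definition divg :: "(real ^ 'n \<Rightarrow> real ^ 'n) \<Rightarrow> real ^ 'n \<Rightarrow> real" where
  "divg F p = (\<Sum>i\<in>UNIV. frechet_derivative F (at p) (axis i 1) $ i)"

definition Fstar :: "(real ^ ('m::finite \<times> bool) \<Rightarrow> real ^ ('m \<times> bool)) \<Rightarrow> real ^ ('m \<times> bool) \<Rightarrow> real ^ ('m \<times> bool)" where
  "Fstar F x = (\<chi> k. if snd k then - (F x $ (fst k, False)) else F x $ (fst k, True))"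

definition singset :: "(real ^ 'n) set \<Rightarrow> (real ^ 'n \<Rightarrow> real ^ 'n) \<Rightarrow> (real ^ 'n \<Rightarrow> real) \<Rightarrow> (real ^ 'n) set" where
  "singset \<Omega> F w = {p \<in> \<Omega>. grad w p + F p = 0}"

definition Nfield :: "(real ^ 'n \<Rightarrow> real ^ 'n) \<Rightarrow> (real ^ 'n \<Rightarrow> real) \<Rightarrow> real ^ 'n \<Rightarrow> real ^ 'n" where
  "Nfield F w p = inverse (norm (grad w p + F p)) *\<^sub>R (grad w p + F p)"

end

theory Submission
  imports Defs
begin

text \<open>
  Write w = u - v and suppose that w > 0 somewhere. For 0 < \<epsilon> < max w let
  \<psi>(t) = max(0, t - \<epsilon>)^2 and consider the C^1 field G = \<psi>(w) (\<nabla>v + F)^*. It vanishes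
  near the boundary, where u = v, so the divergence of G integrates to 0. Now
  div G = \<psi>'(w) \<nabla>w \<cdot> (\<nabla>v + F)^* + \<psi>(w) div (\<nabla>v + F)^*. The first term vanishes since
  \<nabla>w = (\<nabla>u + F) - (\<nabla>v + F), the two brackets are parallel and Y \<cdot> Y^* = 0; in the second,
  div (\<nabla>v)^* = 0 by the symmetry of second derivatives. Hence div G = \<psi>(w) div F^* \<ge> 0 has
  integral 0 and so vanishes almost everywhere, which contradicts div F^* > 0 almost
  everywhere on the nonempty open set {w > \<epsilon>}. Exchanging u and v yields u = v.
\<close>

section \<open>Integrals of partial derivatives with compact support\<close>

lemma has_real_derivative_along_line:
  fixes g :: "'a::real_normed_vector \<Rightarrow> real"
  assumes "(g has_derivative g') (at (x + t *\<^sub>R e))"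
  shows "((\<lambda>s. g (x + s *\<^sub>R e)) has_real_derivative g' e) (at t)"
proof -
  have "((\<lambda>s. x + s *\<^sub>R e) has_derivative (\<lambda>s. s *\<^sub>R e)) (at t)"
    by (auto intro!: derivative_eq_intros)
  from has_derivative_compose[OF this assms]
  have "((\<lambda>s. g (x + s *\<^sub>R e)) has_derivative (\<lambda>s. g' (s *\<^sub>R e))) (at t)"
    by (simp add: o_def)
  moreover have "g' (s *\<^sub>R e) = g' e * s" for s
    using linear_scale[OF has_derivative_linear[OF assms]] by simp
  ultimately show ?thesis
    by (simp add: has_field_derivative_def mult.commute[of _ "g' e"])
qed

lemma mvt_along_line:
  fixes g :: "'a::real_normed_vector \<Rightarrow> real"
  assumes "0 < h" and "\<And>t. 0 \<le> t \<Longrightarrow> t \<le> h \<Longrightarrow> (g has_derivative g' t) (at (x + t *\<^sub>R e))"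
  shows "\<exists>t. 0 < t \<and> t < h \<and> g (x + h *\<^sub>R e) - g x = h * g' t e"
proof -
  have "((\<lambda>s. g (x + s *\<^sub>R e)) has_real_derivative g' t e) (at t)" if "0 \<le> t" "t \<le> h" for t
    using assms(2)[OF that] by (rule has_real_derivative_along_line)
  from MVT2[OF assms(1) this] show ?thesis
    by simp
qed

lemma has_integral_shift_UNIV:
  fixes f :: "'a::euclidean_space \<Rightarrow> 'b::banach"
  assumes "(f has_integral I) (cbox a b)" and "\<And>x. x \<notin> cbox a b \<Longrightarrow> f x = 0"
  shows "((\<lambda>x. f (x + c)) has_integral I) UNIV"
proof (rule has_integral_on_superset)
  show "((\<lambda>x. f (x + c)) has_integral I) (cbox (a - c) (b - c))"
    using assms(1) by (rule has_integral_shift_cbox)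
  show "f (x + c) = 0" if "x \<notin> cbox (a - c) (b - c)" for x
    using that assms(2)[of "x + c"] by (auto simp: mem_box algebra_simps inner_diff_left inner_add_left)
qed auto

lemma difference_quotient_tendsto:
  fixes g :: "'a::real_normed_vector \<Rightarrow> real"
  assumes "(g has_derivative g') (at x)" and "filterlim h (at 0) sequentially"
  shows "(\<lambda>k. (g (x + h k *\<^sub>R e) - g x) / h k) \<longlonglongrightarrow> g' e"
proof -
  have "((\<lambda>s. (g (x + s *\<^sub>R e) - g x) / s) \<longlongrightarrow> g' e) (at 0)"
    using has_real_derivative_along_line[of g g' x 0 e] assms(1) by (simp add: DERIV_def)
  from filterlim_compose[OF this assms(2)] show ?thesis
    by simp
qed

lemma abs_difference_quotient_le:
  fixes g :: "'a::real_normed_vector \<Rightarrow> real"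
  assumes "0 < h" and "\<And>y. (g has_derivative g' y) (at y)" and "\<And>y. \<bar>g' y e\<bar> \<le> M"
  shows "\<bar>(g (x + h *\<^sub>R e) - g x) / h\<bar> \<le> M"
proof -
  obtain t where "g (x + h *\<^sub>R e) - g x = h * g' (x + t *\<^sub>R e) e"
    using mvt_along_line[of h g "\<lambda>t. g' (x + t *\<^sub>R e)" x e] assms(1,2) by blast
  with assms(1,3) show ?thesis
    by simp
qed

lemma has_derivative_eq_0_outside:
  assumes "closed K" and "\<And>x. x \<notin> K \<Longrightarrow> g x = 0"
    and "(g has_derivative g') (at x)" and "x \<notin> K"
  shows "g' = (\<lambda>_. 0)"
proof -
  have "(g has_derivative (\<lambda>_. 0)) (at x)"
    by (rule has_derivative_transform_within_open[of "\<lambda>_. 0" _ _ UNIV "- K"])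
      (use assms in \<open>auto simp: open_Compl\<close>)
  with assms(3) show ?thesis
    by (rule has_derivative_unique)
qed

lemma has_integral_translate_diff_eq_0:
  fixes g :: "'a::euclidean_space \<Rightarrow> real"
  assumes "compact K" and "\<And>x. x \<notin> K \<Longrightarrow> g x = 0" and "continuous_on UNIV g"
  shows "((\<lambda>x. g (x + c) - g x) has_integral 0) UNIV"
proof -
  obtain a where a: "K \<subseteq> cbox (-a) a"
    using bounded_subset_cbox_symmetric[OF compact_imp_bounded[OF assms(1)]] by blast
  have "(g has_integral integral (cbox (-a) a) g) (cbox (-a) a)"
    using assms(3) continuous_on_subset integrable_continuous integrable_integral by blast
  then have "((\<lambda>x. g (x + c)) has_integral integral (cbox (-a) a) g) UNIV" for c
    using a assms(2) by (intro has_integral_shift_UNIV) auto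
  from has_integral_diff[OF this this[of 0]] show ?thesis
    by simp
qed

lemma vanishes_translate_outside_cball:
  fixes g :: "'a::real_normed_vector \<Rightarrow> real"
  assumes "K \<subseteq> cball 0 R" and "\<And>x. x \<notin> K \<Longrightarrow> g x = 0"
    and "0 \<le> h" and "h \<le> 1" and "R + norm e < norm x"
  shows "g (x + h *\<^sub>R e) = 0" and "g x = 0"
proof -
  have "norm x \<le> norm (x + h *\<^sub>R e) + norm e"
    using norm_triangle_ineq4[of "x + h *\<^sub>R e" "h *\<^sub>R e"] assms(3,4)
      mult_left_le_one_le[of "norm e" h] by simp
  with assms(5) have "R < norm x" "R < norm (x + h *\<^sub>R e)"
    using norm_ge_zero[of e] by linarith+
  then show "g (x + h *\<^sub>R e) = 0" "g x = 0"
    using assms(1,2) by (meson mem_cball_0 not_less subsetD)+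
qed

lemma has_integral_directional_derivative_eq_0:
  fixes g :: "'a::euclidean_space \<Rightarrow> real"
  assumes K: "compact K" and g0: "\<And>x. x \<notin> K \<Longrightarrow> g x = 0"
    and g': "\<And>x. (g has_derivative g' x) (at x)"
    and cont: "continuous_on K (\<lambda>x. g' x e)"
  shows "((\<lambda>x. g' x e) has_integral 0) UNIV"
proof -
  have "bounded ((\<lambda>x. g' x e) ` K)"
    using compact_continuous_image[OF cont K] by (rule compact_imp_bounded)
  then obtain M0 where M0: "\<And>x. x \<in> K \<Longrightarrow> \<bar>g' x e\<bar> \<le> M0"
    unfolding bounded_iff by auto
  define M where "M = max M0 0"
  have M: "\<bar>g' x e\<bar> \<le> M" for x
    using M0[of x] has_derivative_eq_0_outside[OF compact_imp_closed[OF K] g0 g', of x]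
    by (cases "x \<in> K") (auto simp: M_def)
  obtain R where R: "K \<subseteq> cball (0::'a) R"
    using bounded_subset_ballD[OF compact_imp_bounded[OF K], of 0] ball_subset_cball by blast
  obtain a where a: "cball (0::'a) (R + norm e) \<subseteq> cbox (-a) a"
    using bounded_subset_cbox_symmetric[OF bounded_cball] by blast
  define B where "B = cbox (-a) a"
  have "continuous_on UNIV g"
    using g' has_derivative_continuous continuous_at_imp_continuous_on by blast
  note shift = has_integral_translate_diff_eq_0[OF K g0 this]
  define h :: "nat \<Rightarrow> real" where "h k = inverse (Suc k)" for k
  have h: "0 < h k" "h k \<le> 1" for k
    by (auto simp: h_def field_simps)
  define q where "q k x = (g (x + h k *\<^sub>R e) - g x) / h k" for k x
  have q: "(q k has_integral 0) UNIV" for k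
    using has_integral_cmul[OF shift, of "1 / h k"]
    by (simp add: q_def[abs_def] divide_inverse mult.commute)
  have "q k x = 0" if "x \<notin> B" for k x
  proof -
    have "R + norm e < norm x"
      using a that unfolding B_def by (meson mem_cball_0 not_less subsetD)
    with vanishes_translate_outside_cball[of K R g "h k" e x] R g0 h[of k] show ?thesis
      by (simp add: q_def)
  qed
  then have q_bound: "\<forall>x\<in>UNIV. norm (q k x) \<le> indicator B x * M" for k
    using abs_difference_quotient_le[OF h(1) g' M] by (simp add: q_def indicator_def)
  have "h \<longlonglongrightarrow> 0"
    unfolding h_def by (rule LIMSEQ_inverse_real_of_nat)
  then have "filterlim h (at 0) sequentially"
    using h by (intro filterlim_atI) (auto simp: less_imp_neq[symmetric])
  then have q_lim: "\<forall>x\<in>UNIV. (\<lambda>k. q k x) \<longlonglongrightarrow> g' x e"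
    unfolding q_def using difference_quotient_tendsto g' by blast
  have "(indicat_real B has_integral measure lebesgue B) UNIV"
    unfolding B_def using lmeasurable_cbox lmeasurable_iff_indicator_has_integral by blast
  then have "(\<lambda>x. indicator B x * M) integrable_on UNIV"
    using has_integral_mult_left integrable_on_def by blast
  from has_integral_dominated_convergence[where y="\<lambda>_. 0", OF q this q_bound q_lim tendsto_const]
  show ?thesis .
qed

section \<open>Symmetry of mixed partial derivatives\<close>

lemma has_derivative_shift:
  assumes "(f has_derivative D) (at (y + c))"
  shows "((\<lambda>y. f (y + c)) has_derivative D) (at y)"
proof -
  have "((\<lambda>y. y + c) has_derivative (\<lambda>d. d)) (at y)"
    by (auto intro!: derivative_eq_intros)
  from has_derivative_compose[OF this assms] show ?thesis
    by (simp add: o_def)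
qed

lemma mvt_second_difference:
  fixes f :: "'a::real_normed_vector \<Rightarrow> real"
  assumes h: "0 < h"
    and square: "\<And>s t. 0 \<le> s \<Longrightarrow> s \<le> h \<Longrightarrow> 0 \<le> t \<Longrightarrow> t \<le> h \<Longrightarrow> x + s *\<^sub>R a + t *\<^sub>R b \<in> S"
    and f': "\<And>y. y \<in> S \<Longrightarrow> (f has_derivative f' y) (at y)"
    and Da: "\<And>y. y \<in> S \<Longrightarrow> ((\<lambda>y. f' y a) has_derivative Da y) (at y)"
  shows "\<exists>s t. 0 < s \<and> s < h \<and> 0 < t \<and> t < h \<and>
    f (x + h *\<^sub>R a + h *\<^sub>R b) - f (x + h *\<^sub>R a) - f (x + h *\<^sub>R b) + f x =
    h * h * Da (x + s *\<^sub>R a + t *\<^sub>R b) b"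
proof -
  define g where "g y = f (y + h *\<^sub>R b) - f y" for y
  have g': "(g has_derivative (\<lambda>d. f' (x + s *\<^sub>R a + h *\<^sub>R b) d - f' (x + s *\<^sub>R a) d))
      (at (x + s *\<^sub>R a))" if "0 \<le> s" "s \<le> h" for s
    unfolding g_def using that h square[of s h] square[of s 0]
    by (intro has_derivative_diff has_derivative_shift f') auto
  obtain s where s: "0 < s" "s < h"
    and "g (x + h *\<^sub>R a) - g x = h * (f' (x + s *\<^sub>R a + h *\<^sub>R b) a - f' (x + s *\<^sub>R a) a)"
    using mvt_along_line[OF h, of g "\<lambda>s d. f' (x + s *\<^sub>R a + h *\<^sub>R b) d - f' (x + s *\<^sub>R a) d" x a] g'
    by blast
  moreover obtain t where "0 < t" "t < h"
    and "f' (x + s *\<^sub>R a + h *\<^sub>R b) a - f' (x + s *\<^sub>R a) a = h * Da (x + s *\<^sub>R a + t *\<^sub>R b) b"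
    using mvt_along_line[OF h, of "\<lambda>y. f' y a" "\<lambda>t. Da (x + s *\<^sub>R a + t *\<^sub>R b)" "x + s *\<^sub>R a" b]
      Da square s by auto
  ultimately show ?thesis
    by (auto simp: g_def algebra_simps)
qed

lemma second_difference_tendsto_mixed_derivative:
  fixes f :: "'a::real_normed_vector \<Rightarrow> real"
  assumes "x \<in> S" and h: "\<And>k. 0 < h k" "h \<longlonglongrightarrow> 0"
    and square: "\<And>k s t. 0 \<le> s \<Longrightarrow> s \<le> h k \<Longrightarrow> 0 \<le> t \<Longrightarrow> t \<le> h k \<Longrightarrow> x + s *\<^sub>R a + t *\<^sub>R b \<in> S"
    and f': "\<And>y. y \<in> S \<Longrightarrow> (f has_derivative f' y) (at y)"
    and Da: "\<And>y. y \<in> S \<Longrightarrow> ((\<lambda>y. f' y a) has_derivative Da y) (at y)"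
    and cont: "continuous_on S (\<lambda>y. Da y b)"
  shows "(\<lambda>k. (f (x + h k *\<^sub>R a + h k *\<^sub>R b) - f (x + h k *\<^sub>R a) - f (x + h k *\<^sub>R b) + f x) / (h k * h k))
    \<longlonglongrightarrow> Da x b"
proof -
  define \<Delta> where "\<Delta> k = f (x + h k *\<^sub>R a + h k *\<^sub>R b) - f (x + h k *\<^sub>R a) - f (x + h k *\<^sub>R b) + f x" for k
  have "\<exists>s t. 0 < s \<and> s < h k \<and> 0 < t \<and> t < h k \<and> \<Delta> k = h k * h k * Da (x + s *\<^sub>R a + t *\<^sub>R b) b" for k
    unfolding \<Delta>_def by (rule mvt_second_difference[OF h(1) square f' Da])
  then obtain s t where st: "\<And>k. 0 < s k \<and> s k < h k \<and> 0 < t k \<and> t k < h k"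
    and \<Delta>: "\<And>k. \<Delta> k = h k * h k * Da (x + s k *\<^sub>R a + t k *\<^sub>R b) b"
    by metis
  have "s \<longlonglongrightarrow> 0" "t \<longlonglongrightarrow> 0"
    by (rule tendsto_sandwich[of "\<lambda>_. 0" _ _ h], use st h(2) in \<open>auto simp: less_imp_le\<close>)+
  from tendsto_add[OF tendsto_add[OF tendsto_const tendsto_scaleR[OF this(1) tendsto_const]]
      tendsto_scaleR[OF this(2) tendsto_const]]
  have "(\<lambda>k. x + s k *\<^sub>R a + t k *\<^sub>R b) \<longlonglongrightarrow> x"
    by simp
  moreover have "x + s k *\<^sub>R a + t k *\<^sub>R b \<in> S" for k
    using st[of k] by (intro square[of _ k]) auto
  ultimately have "(\<lambda>k. Da (x + s k *\<^sub>R a + t k *\<^sub>R b) b) \<longlonglongrightarrow> Da x b"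
    by (intro continuous_on_tendsto_compose[OF cont _ \<open>x \<in> S\<close>] always_eventually allI)
  moreover have "\<Delta> k / (h k * h k) = Da (x + s k *\<^sub>R a + t k *\<^sub>R b) b" for k
    using h(1)[of k] by (simp add: \<Delta>)
  ultimately show ?thesis
    by (simp add: \<Delta>_def)
qed

lemma mixed_derivatives_symmetric:
  fixes f :: "'a::real_normed_vector \<Rightarrow> real"
  assumes S: "open S" "x \<in> S"
    and f': "\<And>y. y \<in> S \<Longrightarrow> (f has_derivative f' y) (at y)"
    and Da: "\<And>y. y \<in> S \<Longrightarrow> ((\<lambda>y. f' y a) has_derivative Da y) (at y)"
    and Db: "\<And>y. y \<in> S \<Longrightarrow> ((\<lambda>y. f' y b) has_derivative Db y) (at y)"
    and cont_a: "continuous_on S (\<lambda>y. Da y b)" and cont_b: "continuous_on S (\<lambda>y. Db y a)"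
  shows "Da x b = Db x a"
proof -
  obtain r where r: "0 < r" "ball x r \<subseteq> S"
    using S open_contains_ball by blast
  define c where "c = norm a + norm b + 1"
  have c: "0 < c" "norm a + norm b < c"
    by (auto simp: c_def add_nonneg_pos)
  define h where "h k = r / c * inverse (Suc k)" for k
  have h: "0 < h k" "h k \<le> r / c" for k
    unfolding h_def using r c by (simp, intro mult_right_le_one_le) (auto simp: field_simps)
  have "h \<longlonglongrightarrow> 0"
    unfolding h_def by (intro tendsto_mult_right_zero LIMSEQ_inverse_real_of_nat)
  have square: "x + s *\<^sub>R u + t *\<^sub>R v \<in> S" \<comment> \<open>for (u, v) = (a, b) and (u, v) = (b, a)\<close>
    if "0 \<le> s" "s \<le> h k" "0 \<le> t" "t \<le> h k" "norm u + norm v = norm a + norm b" for s t u v k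
  proof -
    have "norm (s *\<^sub>R u + t *\<^sub>R v) \<le> s * norm u + t * norm v"
      using that norm_triangle_ineq[of "s *\<^sub>R u" "t *\<^sub>R v"] by simp
    also have "\<dots> \<le> h k * (norm u + norm v)"
      using that(1-4) by (simp add: distrib_left add_mono mult_right_mono)
    also have "\<dots> < h k * c"
      using h(1)[of k] c(2) that(5) by simp
    also have "\<dots> \<le> r"
      using h(2)[of k] c(1) by (simp add: field_simps)
    finally have "x + (s *\<^sub>R u + t *\<^sub>R v) \<in> ball x r"
      by (simp add: dist_norm) (metis add_uminus_conv_diff minus_add_distrib norm_minus_cancel)
    with r show ?thesis
      by (auto simp: add.assoc)
  qed
  have "(\<lambda>k. (f (x + h k *\<^sub>R a + h k *\<^sub>R b) - f (x + h k *\<^sub>R a) - f (x + h k *\<^sub>R b) + f x) / (h k * h k))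
      \<longlonglongrightarrow> Da x b"
    using S(2) h(1) \<open>h \<longlonglongrightarrow> 0\<close> square f' Da cont_a by (rule second_difference_tendsto_mixed_derivative) auto
  moreover have "(\<lambda>k. (f (x + h k *\<^sub>R b + h k *\<^sub>R a) - f (x + h k *\<^sub>R b) - f (x + h k *\<^sub>R a) + f x) / (h k * h k))
      \<longlonglongrightarrow> Db x a"
    using S(2) h(1) \<open>h \<longlonglongrightarrow> 0\<close> square f' Db cont_b by (rule second_difference_tendsto_mixed_derivative) auto
  ultimately show ?thesis
    by (simp add: LIMSEQ_unique algebra_simps)
qed

section \<open>Gradient, divergence and C^1 fields\<close>

lemma has_derivative_frechet_derivative:
  "f differentiable (at x) \<Longrightarrow> (f has_derivative frechet_derivative f (at x)) (at x)"
  by (simp add: frechet_derivative_works)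

lemma has_derivative_imp_grad:
  assumes "(w has_derivative w') (at x)"
  shows "grad w x = (\<chi> i. w' (axis i 1))"
  by (simp add: grad_def frechet_derivative_at[OF assms, symmetric])

lemma has_derivative_imp_divg:
  assumes "(F has_derivative F') (at x)"
  shows "divg F x = (\<Sum>i\<in>UNIV. F' (axis i 1) $ i)"
  by (simp add: divg_def frechet_derivative_at[OF assms, symmetric])

lemma grad_diff:
  assumes "u differentiable (at x)" and "v differentiable (at x)"
  shows "grad (\<lambda>y. u y - v y) x = grad u x - grad v x"
  using has_derivative_imp_grad[OF has_derivative_diff[OF assms[THEN has_derivative_frechet_derivative]]]
  by (simp add: grad_def vec_eq_iff)

lemma grad_compose:
  assumes "w differentiable (at x)" and "(\<psi> has_real_derivative \<psi>') (at (w x))"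
  shows "grad (\<lambda>y. \<psi> (w y)) x = \<psi>' *\<^sub>R grad w x"
proof -
  have "((\<lambda>y. \<psi> (w y)) has_derivative (\<lambda>d. \<psi>' * frechet_derivative w (at x) d)) (at x)"
    using has_derivative_compose[OF has_derivative_frechet_derivative[OF assms(1)]
        assms(2)[unfolded has_field_derivative_def]] by (simp add: o_def)
  from has_derivative_imp_grad[OF this] show ?thesis
    by (simp add: grad_def vec_eq_iff)
qed

lemma C1_fun_diff:
  assumes "C1_fun S u" and "C1_fun S v"
  shows "C1_fun S (\<lambda>x. u x - v x)"
proof -
  have "continuous_on S (\<lambda>x. grad u x - grad v x)"
    using assms by (intro continuous_intros) (auto simp: C1_fun_def)
  then show ?thesis
    using assms by (auto simp: C1_fun_def grad_diff elim!: continuous_on_eq)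
qed

lemma C1_fun_compose:
  assumes w: "C1_fun S w" and \<psi>: "\<And>t. (\<psi> has_real_derivative \<psi>' t) (at t)"
    and cont: "continuous_on UNIV \<psi>'"
  shows "C1_fun S (\<lambda>x. \<psi> (w x))"
proof -
  have "continuous_on S w"
    using w unfolding C1_fun_def
    by (meson differentiable_at_imp_differentiable_on differentiable_imp_continuous_on)
  then have "continuous_on S (\<lambda>x. \<psi>' (w x) *\<^sub>R grad w x)"
    using w by (intro continuous_intros continuous_on_compose2[OF cont]) (auto simp: C1_fun_def)
  moreover have "(\<lambda>x. \<psi> (w x)) differentiable (at x)" if "x \<in> S" for x
    using w that differentiable_chain_at[of w x \<psi>] \<psi> real_differentiable_def
    by (auto simp: C1_fun_def o_def)
  ultimately show ?thesis
    using w unfolding C1_fun_def by (auto simp: grad_compose[OF _ \<psi>] elim!: continuous_on_eq)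
qed

lemma C1_fieldI:
  assumes "\<And>x. x \<in> S \<Longrightarrow> (F has_derivative F' x) (at x)"
    and "\<And>i j. continuous_on S (\<lambda>x. F' x (axis j 1) $ i)"
  shows "C1_field S F"
  unfolding C1_field_def
proof (intro conjI ballI allI)
  show "F differentiable (at x)" if "x \<in> S" for x
    using assms(1)[OF that] by (rule differentiableI)
  show "continuous_on S (\<lambda>x. frechet_derivative F (at x) (axis j 1) $ i)" for i j
    using assms(2) by (rule continuous_on_eq) (simp add: frechet_derivative_at[OF assms(1)])
qed

lemma C1_field_has_derivative:
  "C1_field S F \<Longrightarrow> x \<in> S \<Longrightarrow> (F has_derivative frechet_derivative F (at x)) (at x)"
  by (simp add: C1_field_def has_derivative_frechet_derivative)

lemma C1_field_add:
  assumes F: "C1_field S F" and G: "C1_field S G"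
  shows "C1_field S (\<lambda>x. F x + G x)"
proof (rule C1_fieldI)
  show "((\<lambda>x. F x + G x) has_derivative
      (\<lambda>d. frechet_derivative F (at x) d + frechet_derivative G (at x) d)) (at x)" if "x \<in> S" for x
    using F G that by (intro has_derivative_add C1_field_has_derivative)
  show "continuous_on S (\<lambda>x. (frechet_derivative F (at x) (axis j 1) + frechet_derivative G (at x) (axis j 1)) $ i)"
    for i j
    using F G unfolding C1_field_def vector_add_component by (intro continuous_on_add) auto
qed

lemma has_derivative_scaleR_frechet_derivative:
  assumes "\<phi> differentiable (at x)" and "H differentiable (at x)"
  shows "((\<lambda>y. \<phi> y *\<^sub>R H y) has_derivative
    (\<lambda>d. \<phi> x *\<^sub>R frechet_derivative H (at x) d + frechet_derivative \<phi> (at x) d *\<^sub>R H x)) (at x)"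
  using has_derivative_scaleR[OF assms[THEN has_derivative_frechet_derivative]] .

lemma C1_field_scaleR:
  assumes \<phi>: "C1_fun S \<phi>" and H: "C1_field S H"
  shows "C1_field S (\<lambda>x. \<phi> x *\<^sub>R H x)"
proof (rule C1_fieldI)
  show "((\<lambda>y. \<phi> y *\<^sub>R H y) has_derivative
      (\<lambda>d. \<phi> x *\<^sub>R frechet_derivative H (at x) d + frechet_derivative \<phi> (at x) d *\<^sub>R H x)) (at x)"
    if "x \<in> S" for x
    using \<phi> H that unfolding C1_fun_def C1_field_def by (intro has_derivative_scaleR_frechet_derivative) auto
  fix i j
  have "continuous_on S \<phi>" "continuous_on S H"
    using assms unfolding C1_fun_def C1_field_def
    by (meson differentiable_at_imp_differentiable_on differentiable_imp_continuous_on)+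
  moreover have "continuous_on S (\<lambda>x. grad \<phi> x $ j)"
    using \<phi> unfolding C1_fun_def by (simp add: continuous_on_component)
  moreover have "continuous_on S (\<lambda>x. frechet_derivative H (at x) (axis j 1) $ i)"
    using H unfolding C1_field_def by simp
  ultimately show "continuous_on S (\<lambda>x. (\<phi> x *\<^sub>R frechet_derivative H (at x) (axis j 1) +
      frechet_derivative \<phi> (at x) (axis j 1) *\<^sub>R H x) $ i)"
    using continuous_on_component by (simp add: grad_def) (intro continuous_on_add continuous_on_mult; blast)
qed

lemma continuous_on_divg:
  assumes "C1_field S F"
  shows "continuous_on S (divg F)"
  using assms unfolding C1_field_def divg_def by (intro continuous_on_sum) auto

lemma divg_add:
  assumes "F differentiable (at x)" and "G differentiable (at x)"
  shows "divg (\<lambda>y. F y + G y) x = divg F x + divg G x"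
  using has_derivative_imp_divg[OF has_derivative_add[OF assms[THEN has_derivative_frechet_derivative]]]
  by (simp add: divg_def sum.distrib)

lemma divg_scaleR:
  assumes "\<phi> differentiable (at x)" and "H differentiable (at x)"
  shows "divg (\<lambda>y. \<phi> y *\<^sub>R H y) x = grad \<phi> x \<bullet> H x + \<phi> x * divg H x"
  using has_derivative_imp_divg[OF has_derivative_scaleR_frechet_derivative[OF assms]]
  by (simp add: divg_def grad_def inner_vec_def sum.distrib sum_distrib_left mult.commute)

lemma has_integral_divg_eq_0:
  fixes G :: "real ^ 'n \<Rightarrow> real ^ 'n"
  assumes "open S" and "compact K" and "K \<subseteq> S"
    and G: "C1_field S G" and G0: "\<And>x. x \<in> S - K \<Longrightarrow> G x = 0"
  shows "((\<lambda>x. if x \<in> S then divg G x else 0) has_integral 0) UNIV"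
proof -
  define G' where "G' x = (if x \<in> S then frechet_derivative G (at x) else (\<lambda>_. 0))" for x
  have G'_ext: "((\<lambda>x. if x \<in> S then G x else 0) has_derivative G' x) (at x)" for x
  proof (cases "x \<in> S")
    case True
    with G have "(G has_derivative G' x) (at x)"
      by (simp add: G'_def C1_field_def has_derivative_frechet_derivative)
    then show ?thesis
      by (rule has_derivative_transform_within_open) (use True \<open>open S\<close> in auto)
  next
    case False
    have "((\<lambda>_. 0) has_derivative G' x) (at x)"
      using False by (simp add: G'_def)
    then show ?thesis
      by (rule has_derivative_transform_within_open[where s="- K"])
        (use False G0 \<open>compact K\<close> \<open>K \<subseteq> S\<close> in \<open>auto simp: compact_imp_closed open_Compl\<close>)
  qed
  have "((\<lambda>x. G' x (axis i 1) $ i) has_integral 0) UNIV" for i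
  proof (rule has_integral_directional_derivative_eq_0[OF \<open>compact K\<close>])
    show "(if x \<in> S then G x else 0) $ i = 0" if "x \<notin> K" for x
      using that G0 by auto
    show "((\<lambda>x. (if x \<in> S then G x else 0) $ i) has_derivative (\<lambda>d. G' x d $ i)) (at x)" for x
      using bounded_linear.has_derivative[OF bounded_linear_vec_nth G'_ext] .
    have "continuous_on S (\<lambda>x. G' x (axis i 1) $ i)"
      using G unfolding C1_field_def by (auto simp: G'_def elim!: continuous_on_eq)
    then show "continuous_on K (\<lambda>x. G' x (axis i 1) $ i)"
      using \<open>K \<subseteq> S\<close> by (rule continuous_on_subset)
  qed
  then have "((\<lambda>x. \<Sum>i\<in>UNIV. G' x (axis i 1) $ i) has_integral 0) UNIV"
    using has_integral_sum[of UNIV "\<lambda>i x. G' x (axis i 1) $ i" "\<lambda>_. 0" UNIV] by simp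
  then show ?thesis
    by (rule has_integral_eq[rotated]) (simp add: G'_def divg_def)
qed

section \<open>The rotation F \<mapsto> F^*\<close>

definition Jrot :: "real ^ ('m::finite \<times> bool) \<Rightarrow> real ^ ('m \<times> bool)" where
  "Jrot y = (\<chi> k. if snd k then - y $ (fst k, False) else y $ (fst k, True))"

lemma Fstar_eq_Jrot: "Fstar F x = Jrot (F x)"
  by (simp add: Fstar_def Jrot_def)

lemma bounded_linear_Jrot: "bounded_linear Jrot"
proof -
  have "linear Jrot"
    by (rule linearI) (auto simp: Jrot_def vec_eq_iff)
  then show ?thesis
    by (rule linear_conv_bounded_linear[THEN iffD1])
qed

lemma sum_UNIV_prod_bool:
  "(\<Sum>k\<in>UNIV. f k) = (\<Sum>j\<in>UNIV. f (j, False) + f (j, True))"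
proof -
  have "(\<Sum>k\<in>UNIV. f k) = (\<Sum>j\<in>UNIV. \<Sum>b\<in>UNIV. f (j, b))"
    by (simp add: sum.cartesian_product)
  then show ?thesis
    by (simp add: UNIV_bool)
qed

lemma Jrot_0 [simp]: "Jrot 0 = 0"
  by (simp add: Jrot_def vec_eq_iff)

lemma inner_Jrot_self: "y \<bullet> Jrot y = 0"
  by (simp add: inner_vec_def sum_UNIV_prod_bool Jrot_def)

lemma inner_Jrot_eq_0_if_parallel:
  assumes "x \<noteq> 0 \<Longrightarrow> y \<noteq> 0 \<Longrightarrow> sgn x = sgn y"
  shows "x \<bullet> Jrot y = 0"
proof (cases "x = 0 \<or> y = 0")
  case True
  then show ?thesis
    by auto
next
  case False
  have "x = norm x *\<^sub>R sgn x"
    using False by (simp add: sgn_div_norm)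
  also have "\<dots> = (norm x / norm y) *\<^sub>R y"
    using assms False by (simp add: sgn_div_norm divide_inverse)
  finally show ?thesis
    by (metis inner_Jrot_self inner_scaleR_left mult_zero_right)
qed

lemma has_derivative_Fstar:
  assumes "(F has_derivative F') (at x)"
  shows "(Fstar F has_derivative (\<lambda>d. Jrot (F' d))) (at x)"
  using bounded_linear.has_derivative[OF bounded_linear_Jrot assms]
  by (simp add: Fstar_eq_Jrot[abs_def])

lemma Fstar_add: "Fstar (\<lambda>x. F x + G x) = (\<lambda>x. Fstar F x + Fstar G x)"
  by (simp add: fun_eq_iff vec_eq_iff Fstar_def)

lemma C1_field_Fstar:
  assumes F: "C1_field S F"
  shows "C1_field S (Fstar F)"
proof (rule C1_fieldI)
  show "(Fstar F has_derivative (\<lambda>d. Jrot (frechet_derivative F (at x) d))) (at x)" if "x \<in> S" for x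
    using F that by (intro has_derivative_Fstar C1_field_has_derivative)
  have "continuous_on S (\<lambda>x. frechet_derivative F (at x) (axis j 1) $ k)" for j k
    using F unfolding C1_field_def by blast
  then show "continuous_on S (\<lambda>x. Jrot (frechet_derivative F (at x) (axis j 1)) $ i)" for i j
    unfolding Jrot_def by (cases "snd i") (simp_all add: continuous_on_minus)
qed

lemma divg_Fstar:
  assumes "F differentiable (at x)"
  shows "divg (Fstar F) x = (\<Sum>j\<in>UNIV.
    frechet_derivative F (at x) (axis (j, False) 1) $ (j, True) -
    frechet_derivative F (at x) (axis (j, True) 1) $ (j, False))"
  using has_derivative_imp_divg[OF has_derivative_Fstar[OF has_derivative_frechet_derivative[OF assms]]]
  by (simp add: sum_UNIV_prod_bool Jrot_def)

lemma divg_Fstar_grad: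
  assumes "open S" and "C2_fun S v" and "x \<in> S"
  shows "divg (Fstar (grad v)) x = 0"
proof -
  have v': "(v has_derivative frechet_derivative v (at y)) (at y)"
    and gv': "(grad v has_derivative frechet_derivative (grad v) (at y)) (at y)" if "y \<in> S" for y
    using assms that by (auto simp: C2_fun_def C1_fun_def C1_field_def intro: has_derivative_frechet_derivative)
  have partial: "((\<lambda>y. frechet_derivative v (at y) (axis k 1)) has_derivative
      (\<lambda>d. frechet_derivative (grad v) (at y) d $ k)) (at y)" if "y \<in> S" for y k
    using bounded_linear.has_derivative[OF bounded_linear_vec_nth gv'[OF that]] by (simp add: grad_def)
  have cont: "continuous_on S (\<lambda>y. frechet_derivative (grad v) (at y) (axis j 1) $ i)" for i j
    using assms(2) unfolding C2_fun_def C1_field_def by blast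
  have "frechet_derivative (grad v) (at x) (axis j 1) $ i = frechet_derivative (grad v) (at x) (axis i 1) $ j" for i j
    by (rule mixed_derivatives_symmetric[OF assms(1,3) v' partial partial cont cont])
  with assms show ?thesis
    by (simp add: divg_Fstar C2_fun_def C1_field_def)
qed

section \<open>The comparison principle\<close>

lemma AE_lebesgue_ex_in_open:
  fixes U :: "'a::euclidean_space set"
  assumes "open U" and "U \<noteq> {}" and "AE x in lebesgue. P x"
  shows "\<exists>x\<in>U. P x"
proof (rule ccontr)
  assume "\<not> (\<exists>x\<in>U. P x)"
  with assms(3) have "AE x \<in> U in lebesgue. x \<in> {}"
    by (auto elim: AE_mp)
  with assms(1,2) show False
    using mem_closed_if_AE_lebesgue_open[of U "{}"] by blast
qed

lemma has_integral_0_nonneg_AE_eq_0: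
  fixes f :: "'a::euclidean_space \<Rightarrow> real"
  assumes nonneg: "\<And>x. 0 \<le> f x" and f: "(f has_integral 0) UNIV"
  shows "AE x in lebesgue. f x = 0"
proof -
  have abs_int: "f absolutely_integrable_on UNIV"
    using f nonneg by (intro nonnegative_absolutely_integrable_1) (auto simp: integrable_on_def)
  then have "integrable lebesgue f" and "integral\<^sup>L lebesgue f = 0"
    using set_lebesgue_integral_eq_integral(2)[OF abs_int] integral_unique[OF f]
    by (simp_all add: set_integrable_def set_lebesgue_integral_def)
  then show ?thesis
    using integral_nonneg_eq_0_iff_AE nonneg by blast
qed

lemma has_real_derivative_pos_part_power2:
  "((\<lambda>t. (max 0 (t - c))\<^sup>2) has_real_derivative 2 * max 0 (t - c)) (at t)"
proof (cases t c rule: linorder_cases)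
  case less
  have "((\<lambda>t. 0) has_real_derivative 0) (at t)"
    by simp
  from has_field_derivative_transform_within_open[OF this, of "{..<c}"] less show ?thesis
    by simp
next
  case greater
  have "((\<lambda>t. (t - c)\<^sup>2) has_real_derivative 2 * (t - c)) (at t)"
    by (auto intro!: derivative_eq_intros)
  from has_field_derivative_transform_within_open[OF this, of "{c<..}"] greater show ?thesis
    by simp
next
  case equal
  have "((\<lambda>h. (max 0 (t + h - c))\<^sup>2 / h) \<longlongrightarrow> 0) (at 0)"
  proof (rule Lim_null_comparison)
    show "\<forall>\<^sub>F h in at 0. norm ((max 0 (t + h - c))\<^sup>2 / h) \<le> \<bar>h\<bar>"
      using equal by (auto simp: power2_eq_square abs_mult max_def divide_le_eq)
    show "((\<lambda>h::real. \<bar>h\<bar>) \<longlongrightarrow> 0) (at 0)"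
      using tendsto_rabs[OF tendsto_ident_at[of 0 UNIV]] by simp
  qed
  then show ?thesis
    using equal by (simp add: DERIV_def)
qed

lemma Nfield_eq_sgn: "Nfield F w p = sgn (grad w p + F p)"
  by (simp add: Nfield_def sgn_div_norm)

lemma divg_scaleR_Fstar_grad_eq:
  fixes F :: "real ^ ('m::finite \<times> bool) \<Rightarrow> real ^ ('m \<times> bool)"
  assumes S: "open S" "x \<in> S"
    and F: "C1_field S F" and u: "C1_fun S u" and v: "C2_fun S v"
    and N: "grad u x + F x \<noteq> 0 \<Longrightarrow> grad v x + F x \<noteq> 0 \<Longrightarrow> Nfield F u x = Nfield F v x"
    and \<psi>: "\<And>t. (\<psi> has_real_derivative \<psi>' t) (at t)"
  shows "divg (\<lambda>y. \<psi> (u y - v y) *\<^sub>R Fstar (\<lambda>y. grad v y + F y) y) x =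
    \<psi> (u x - v x) * divg (Fstar F) x"
proof -
  have du: "u differentiable (at x)" and dv: "v differentiable (at x)"
    and dgv: "grad v differentiable (at x)" and dF: "F differentiable (at x)"
    using S F u v by (auto simp: C1_fun_def C2_fun_def C1_field_def)
  then have dFstar: "Fstar (grad v) differentiable (at x)" "Fstar F differentiable (at x)"
    using has_derivative_Fstar unfolding differentiable_def by blast+
  define X where "X = grad u x + F x"
  define Y where "Y = grad v x + F x"
  have "(grad u x - grad v x) \<bullet> Fstar (\<lambda>y. grad v y + F y) x = (X - Y) \<bullet> Jrot Y"
    by (simp add: X_def Y_def Fstar_eq_Jrot)
  also have "\<dots> = X \<bullet> Jrot Y - Y \<bullet> Jrot Y"
    by (rule inner_diff_left)
  also have "\<dots> = 0"
    using N by (simp add: inner_Jrot_self inner_Jrot_eq_0_if_parallel X_def Y_def Nfield_eq_sgn)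
  finally have "grad (\<lambda>y. \<psi> (u y - v y)) x \<bullet> Fstar (\<lambda>y. grad v y + F y) x = 0"
    using grad_compose[of "\<lambda>y. u y - v y", OF differentiable_diff[OF du dv] \<psi>] grad_diff[OF du dv]
    by simp
  moreover have "divg (Fstar (\<lambda>y. grad v y + F y)) x = divg (Fstar F) x"
    using divg_add[OF dFstar] divg_Fstar_grad[OF S(1) v S(2)] by (simp add: Fstar_add)
  moreover have "(\<lambda>y. \<psi> (u y - v y)) differentiable (at x)"
    using differentiable_chain_at[OF differentiable_diff[OF du dv]
        differentiableI[OF \<psi>[unfolded has_field_derivative_def]]]
    by (simp add: o_def)
  moreover have "Fstar (\<lambda>y. grad v y + F y) differentiable (at x)"
    using dgv dF has_derivative_Fstar has_derivative_add unfolding differentiable_def by blast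
  ultimately show ?thesis
    by (simp add: divg_scaleR)
qed

lemma compact_superlevel_set_subset_open:
  fixes w :: "'a::euclidean_space \<Rightarrow> real"
  assumes "open \<Omega>" and "bounded \<Omega>" and "continuous_on (closure \<Omega>) w"
    and "\<forall>p \<in> frontier \<Omega>. w p \<le> 0" and "0 < \<epsilon>"
  shows "compact (closure \<Omega> \<inter> w -` {\<epsilon>..})" and "closure \<Omega> \<inter> w -` {\<epsilon>..} \<subseteq> \<Omega>"
proof -
  show "compact (closure \<Omega> \<inter> w -` {\<epsilon>..})"
    unfolding compact_eq_bounded_closed
    using assms(2,3) by (auto intro: bounded_subset continuous_closed_preimage)
  show "closure \<Omega> \<inter> w -` {\<epsilon>..} \<subseteq> \<Omega>"
    using assms(1,4,5) by (force simp: frontier_def interior_open)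
qed

lemma AE_pos_imp_nonneg:
  fixes f :: "'a::euclidean_space \<Rightarrow> real"
  assumes "open S" and "continuous_on S f" and "AE x in lebesgue. x \<in> S \<longrightarrow> f x > 0" and "x \<in> S"
  shows "0 \<le> f x"
proof (rule ccontr)
  assume "\<not> 0 \<le> f x"
  with assms(4) have "S \<inter> f -` {..<0} \<noteq> {}"
    by auto
  moreover have "open (S \<inter> f -` {..<0})"
    using assms(1,2) by (intro continuous_open_preimage) auto
  ultimately show False
    using AE_lebesgue_ex_in_open[OF _ _ assms(3)] by fastforce
qed

lemma le_if_Nfield_eq:
  fixes \<Omega> :: "(real ^ ('m::finite \<times> bool)) set"
    and F :: "real ^ ('m \<times> bool) \<Rightarrow> real ^ ('m \<times> bool)"
    and u v :: "real ^ ('m \<times> bool) \<Rightarrow> real"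
  assumes \<Omega>: "open \<Omega>" "bounded \<Omega>" and F: "C1_field \<Omega> F"
    and u: "C1_fun \<Omega> u" "continuous_on (closure \<Omega>) u"
    and v: "C2_fun \<Omega> v" "continuous_on (closure \<Omega>) v"
    and N: "\<forall>p \<in> \<Omega> - (singset \<Omega> F u \<union> singset \<Omega> F v). Nfield F u p = Nfield F v p"
    and boundary: "\<forall>p \<in> frontier \<Omega>. u p = v p"
    and div_pos: "AE x in lebesgue. x \<in> \<Omega> \<longrightarrow> divg (Fstar F) x > 0"
    and "x \<in> \<Omega>"
  shows "u x \<le> v x"
proof (rule ccontr)
  assume "\<not> u x \<le> v x"
  define w where "w y = u y - v y" for y
  define \<epsilon> where "\<epsilon> = w x / 2"
  have \<epsilon>: "0 < \<epsilon>" "\<epsilon> < w x"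
    using \<open>\<not> u x \<le> v x\<close> by (auto simp: \<epsilon>_def w_def)
  define \<psi> where "\<psi> t = (max 0 (t - \<epsilon>))\<^sup>2" for t
  have \<psi>': "(\<psi> has_real_derivative 2 * max 0 (t - \<epsilon>)) (at t)" for t
    unfolding \<psi>_def by (rule has_real_derivative_pos_part_power2)
  have w_cont: "continuous_on (closure \<Omega>) w"
    using u v unfolding w_def by (intro continuous_intros)
  define K where "K = closure \<Omega> \<inter> w -` {\<epsilon>..}"
  have "compact K" and "K \<subseteq> \<Omega>"
    using compact_superlevel_set_subset_open[OF \<Omega> w_cont _ \<epsilon>(1)] boundary
    unfolding K_def w_def by auto
  define G where "G y = \<psi> (w y) *\<^sub>R Fstar (\<lambda>y. grad v y + F y) y" for y
  have "C1_fun \<Omega> v" "C1_field \<Omega> (grad v)"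
    using v(1) by (simp_all add: C2_fun_def)
  have "continuous_on UNIV (\<lambda>t. 2 * max 0 (t - \<epsilon>))"
    by (intro continuous_intros)
  then have "C1_field \<Omega> G"
    unfolding G_def w_def
    using C1_field_scaleR[OF C1_fun_compose[OF C1_fun_diff[OF u(1) \<open>C1_fun \<Omega> v\<close>] \<psi>']
        C1_field_Fstar[OF C1_field_add[OF \<open>C1_field \<Omega> (grad v)\<close> F]]]
    by simp
  have G0: "G y = 0" if "y \<in> \<Omega> - K" for y
    using that closure_subset by (auto simp: G_def K_def \<psi>_def)
  define D where "D y = (if y \<in> \<Omega> then divg G y else 0)" for y
  have "(D has_integral 0) UNIV"
    unfolding D_def using \<Omega>(1) \<open>compact K\<close> \<open>K \<subseteq> \<Omega>\<close> \<open>C1_field \<Omega> G\<close> G0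
    by (rule has_integral_divg_eq_0)
  have D: "D y = \<psi> (w y) * divg (Fstar F) y" if "y \<in> \<Omega>" for y
  proof -
    have "grad u y + F y \<noteq> 0 \<Longrightarrow> grad v y + F y \<noteq> 0 \<Longrightarrow> Nfield F u y = Nfield F v y"
      using N that by (auto simp: singset_def)
    from divg_scaleR_Fstar_grad_eq[OF \<Omega>(1) that F u(1) v(1) this \<psi>'] that show ?thesis
      by (simp add: D_def G_def[abs_def] w_def)
  qed
  have div_nonneg: "0 \<le> divg (Fstar F) y" if "y \<in> \<Omega>" for y
    using \<Omega>(1) continuous_on_divg[OF C1_field_Fstar[OF F]] div_pos that by (rule AE_pos_imp_nonneg)
  have "AE y in lebesgue. D y = 0"
  proof (rule has_integral_0_nonneg_AE_eq_0)
    show "0 \<le> D y" for y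
      using div_nonneg D by (simp add: D_def \<psi>_def)
  qed fact
  with div_pos have "AE y in lebesgue. D y = 0 \<and> (y \<in> \<Omega> \<longrightarrow> divg (Fstar F) y > 0)"
    by eventually_elim simp
  moreover have "open (\<Omega> \<inter> w -` {\<epsilon><..})"
    using continuous_on_subset[OF w_cont closure_subset] \<Omega>(1)
    by (intro continuous_open_preimage) auto
  moreover have "x \<in> \<Omega> \<inter> w -` {\<epsilon><..}"
    using \<open>x \<in> \<Omega>\<close> \<epsilon> by simp
  ultimately obtain y where "y \<in> \<Omega>" "\<epsilon> < w y" "D y = 0" "divg (Fstar F) y > 0"
    using AE_lebesgue_ex_in_open by blast
  then show False
    using D[of y] by (simp add: \<psi>_def)
qed

theorem lemma5p3:
  fixes \<Omega> :: "(real ^ ('m::finite \<times> bool)) set"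
    and F :: "real ^ ('m \<times> bool) \<Rightarrow> real ^ ('m \<times> bool)"
    and u v :: "real ^ ('m \<times> bool) \<Rightarrow> real"
  assumes "open \<Omega>" and "connected \<Omega>" and "\<Omega> \<noteq> {}" and "bounded \<Omega>"
    and "C1_field \<Omega> F"
    and "C2_fun \<Omega> u" and "continuous_on (closure \<Omega>) u"
    and "C2_fun \<Omega> v" and "continuous_on (closure \<Omega>) v"
    and "\<forall>p \<in> \<Omega> - (singset \<Omega> F u \<union> singset \<Omega> F v). Nfield F u p = Nfield F v p"
    and "\<forall>p \<in> frontier \<Omega>. u p = v p"
    and "AE x in lebesgue. x \<in> \<Omega> \<longrightarrow> divg (Fstar F) x > 0"
  shows "\<forall>p \<in> closure \<Omega>. u p = v p"
proof
  fix p assume p: "p \<in> closure \<Omega>"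
  show "u p = v p"
  proof (cases "p \<in> \<Omega>")
    case True
    have "C1_fun \<Omega> u" "C1_fun \<Omega> v"
      using assms(6,8) by (simp_all add: C2_fun_def)
    moreover have "\<forall>p \<in> \<Omega> - (singset \<Omega> F v \<union> singset \<Omega> F u). Nfield F v p = Nfield F u p"
      and "\<forall>p \<in> frontier \<Omega>. v p = u p"
      using assms(10,11) by auto
    ultimately have "u p \<le> v p" and "v p \<le> u p"
      using le_if_Nfield_eq[OF assms(1,4,5) _ assms(7-12) True]
        le_if_Nfield_eq[OF assms(1,4,5) _ assms(9,6,7) _ _ assms(12) True]
      by blast+
    then show ?thesis
      by simp
  next
    case False
    with p assms(1,11) show ?thesis
      by (simp add: frontier_def interior_open)
  qed
qed

end
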